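(* Let $A,K$ be associative algebras and $\xi:A\to\mathrm{Out}(K)$ a coupling admitting a bimultiplication law covering it. Then the $A$-kernel $(K,\xi)$ is extendible if and only if $\mathrm{Obs}(\xi)=0$ in $HH^3(A,\mathrm{Anni}K)$.
   Context: All algebras are associative, not necessarily unital, over a field $\mathbb F$. For an algebra $K$, a bimultiplication of $K$ is a pair $(u,v)$ of linear maps $K\to K$ with $k_1u(k_2)=v(k_1)k_2$, $u(k_1k_2)=u(k_1)k_2$, $v(k_1k_2)=k_1v(k_2)$; these form an algebra $\mathrm{Mul}(K)$ with product $(u_1,v_1)(u_2,v_2)=(u_1\circ u_2,\ v_2\circ v_1)$. $\epsilon:K\to\mathrm{Mul}(K)$, $\epsilon(k_0)=(k\mapsto k_0k,\ k\mapsto kk_0)$; $\mathrm{Inn}(K)=\epsilon(K)$, $\mathrm{Out}(K)=\mathrm{Mul}(K)/\mathrm{Inn}(K)$ with projection $\natural$; $\mathrm{Anni}K=\{k: kK=0=Kk\}$. A coupling is an algebra homomorphism $\xi:A\to\mathrm{Out}(K)$; $(K,\xi)$ is called an $A$-kernel. A bimultiplication law covering $\xi$ is a linear map $\mu:A\to\mathrm{Mul}(K)$, $\mu(a)=(u_a,v_a)$, with $\natural\circ\mu=\xi$ and $u_av_b=v_bu_a$ for all $a,b\in A$; $\mathrm{Anni}K$ is then an $A$-bimodule via $a\cdot n=u_a(n)$, $n\cdot a=v_a(n)$, independent of $\mu$. Curvature $R^\mu(a_1,a_2)=\mu(a_1)\mu(a_2)-\mu(a_1a_2)\in\mathrm{Inn}(K)$;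 a hindrance is a bilinear $h:A\times A\to K$ with $\epsilon\circ h=R^\mu$; $f(\mu,h)(a_1,a_2,a_3)=u_{a_1}h(a_2,a_3)-h(a_1a_2,a_3)+h(a_1,a_2a_3)-v_{a_3}h(a_1,a_2)$ is a Hochschild 3-cocycle with values in $\mathrm{Anni}K$ whose class $\mathrm{Obs}(\xi)\in HH^3(A,\mathrm{Anni}K)$ is independent of $\mu,h$. The kernel $(K,\xi)$ is extendible if there is an algebra $B$ containing $K$ as a two-sided ideal and a surjective algebra homomorphism $\beta:B\to A$ with kernel $K$ such that for a linear section $\gamma$ of $\beta$, $\xi(a)=\natural\big(k\mapsto\gamma(a)k,\ k\mapsto k\gamma(a)\big)$ for all $a\in A$. *)

theory Defs
  imports Main
begin

text \<open>An associative (not necessarily unital) algebra over a field 'f, given by explicit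
operations on a type whose whole universe is the carrier.\<close>

record ('f, 'a) alg =
  aadd :: "'a \<Rightarrow> 'a \<Rightarrow> 'a"
  azero :: 'a
  aneg :: "'a \<Rightarrow> 'a"
  asc :: "'f \<Rightarrow> 'a \<Rightarrow> 'a"
  amul :: "'a \<Rightarrow> 'a \<Rightarrow> 'a"

definition is_alg :: "('f::field, 'a) alg \<Rightarrow> bool" where
  "is_alg R \<longleftrightarrow>
     (\<forall>x y z. aadd R (aadd R x y) z = aadd R x (aadd R y z)) \<and>
     (\<forall>x y. aadd R x y = aadd R y x) \<and>
     (\<forall>x. aadd R (azero R) x = x) \<and>
     (\<forall>x. aadd R (aneg R x) x = azero R) \<and>
     (\<forall>a b x. asc R (a * b) x = asc R a (asc R b x)) \<and>
     (\<forall>x. asc R 1 x = x) \<and>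
     (\<forall>a x y. asc R a (aadd R x y) = aadd R (asc R a x) (asc R a y)) \<and>
     (\<forall>a b x. asc R (a + b) x = aadd R (asc R a x) (asc R b x)) \<and>
     (\<forall>x y z. amul R (amul R x y) z = amul R x (amul R y z)) \<and>
     (\<forall>x y z. amul R x (aadd R y z) = aadd R (amul R x y) (amul R x z)) \<and>
     (\<forall>x y z. amul R (aadd R x y) z = aadd R (amul R x z) (amul R y z)) \<and>
     (\<forall>a x y. amul R (asc R a x) y = asc R a (amul R x y)) \<and>
     (\<forall>a x y. amul R x (asc R a y) = asc R a (amul R x y))"

definition asub :: "('f, 'a) alg \<Rightarrow> 'a \<Rightarrow> 'a \<Rightarrow> 'a" where
  "asub R x y = aadd R x (aneg R y)"

definition lin :: "('f, 'a) alg \<Rightarrow> ('f, 'b) alg \<Rightarrow> ('a \<Rightarrow> 'b) \<Rightarrow> bool" where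
  "lin R S f \<longleftrightarrow> (\<forall>x y. f (aadd R x y) = aadd S (f x) (f y)) \<and>
                  (\<forall>c x. f (asc R c x) = asc S c (f x))"

definition alg_hom :: "('f, 'a) alg \<Rightarrow> ('f, 'b) alg \<Rightarrow> ('a \<Rightarrow> 'b) \<Rightarrow> bool" where
  "alg_hom R S f \<longleftrightarrow> lin R S f \<and> (\<forall>x y. f (amul R x y) = amul S (f x) (f y))"

definition bilin :: "('f, 'a) alg \<Rightarrow> ('f, 'k) alg \<Rightarrow> ('a \<Rightarrow> 'a \<Rightarrow> 'k) \<Rightarrow> bool" where
  "bilin A K g \<longleftrightarrow> (\<forall>a. lin A K (g a)) \<and> (\<forall>b. lin A K (\<lambda>a. g a b))"

type_synonym 'k bim = "('k \<Rightarrow> 'k) \<times> ('k \<Rightarrow> 'k)"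

definition bimult :: "('f, 'k) alg \<Rightarrow> 'k bim \<Rightarrow> bool" where
  "bimult K p \<longleftrightarrow> lin K K (fst p) \<and> lin K K (snd p) \<and>
     (\<forall>k1 k2. amul K k1 (fst p k2) = amul K (snd p k1) k2) \<and>
     (\<forall>k1 k2. fst p (amul K k1 k2) = amul K (fst p k1) k2) \<and>
     (\<forall>k1 k2. snd p (amul K k1 k2) = amul K k1 (snd p k2))"

definition Mul :: "('f, 'k) alg \<Rightarrow> 'k bim set" where
  "Mul K = {p. bimult K p}"

definition mul_add :: "('f, 'k) alg \<Rightarrow> 'k bim \<Rightarrow> 'k bim \<Rightarrow> 'k bim" where
  "mul_add K p q = (\<lambda>k. aadd K (fst p k) (fst q k), \<lambda>k. aadd K (snd p k) (snd q k))"

definition mul_sc :: "('f, 'k) alg \<Rightarrow> 'f \<Rightarrow> 'k bim \<Rightarrow> 'k bim" where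
  "mul_sc K c p = (\<lambda>k. asc K c (fst p k), \<lambda>k. asc K c (snd p k))"

definition mul_prod :: "'k bim \<Rightarrow> 'k bim \<Rightarrow> 'k bim" where
  "mul_prod p q = (fst p \<circ> fst q, snd q \<circ> snd p)"

definition eps :: "('f, 'k) alg \<Rightarrow> 'k \<Rightarrow> 'k bim" where
  "eps K k0 = (\<lambda>k. amul K k0 k, \<lambda>k. amul K k k0)"

definition Inn :: "('f, 'k) alg \<Rightarrow> 'k bim set" where
  "Inn K = range (eps K)"

text \<open>The projection Mul(K) \<rightarrow> Out(K) = Mul(K)/Inn(K): the coset m + Inn(K).\<close>

definition out_class :: "('f, 'k) alg \<Rightarrow> 'k bim \<Rightarrow> 'k bim set" where
  "out_class K m = {mul_add K m (eps K k) | k. True}"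

definition Out :: "('f, 'k) alg \<Rightarrow> 'k bim set set" where
  "Out K = out_class K ` Mul K"

text \<open>A coupling: an algebra homomorphism A \<rightarrow> Out(K) (quotient algebra operations
  computed on representatives).\<close>

definition coupling :: "('f, 'a) alg \<Rightarrow> ('f, 'k) alg \<Rightarrow> ('a \<Rightarrow> 'k bim set) \<Rightarrow> bool" where
  "coupling A K xi \<longleftrightarrow>
     (\<forall>a. xi a \<in> Out K) \<and>
     (\<forall>a b m1 m2. m1 \<in> xi a \<longrightarrow> m2 \<in> xi b \<longrightarrow>
        xi (aadd A a b) = out_class K (mul_add K m1 m2) \<and>
        xi (amul A a b) = out_class K (mul_prod m1 m2)) \<and>
     (\<forall>c a m. m \<in> xi a \<longrightarrow> xi (asc A c a) = out_class K (mul_sc K c m))"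

definition bimult_law ::
  "('f, 'a) alg \<Rightarrow> ('f, 'k) alg \<Rightarrow> ('a \<Rightarrow> 'k bim set) \<Rightarrow> ('a \<Rightarrow> 'k bim) \<Rightarrow> bool" where
  "bimult_law A K xi mu \<longleftrightarrow>
     (\<forall>a b. mu (aadd A a b) = mul_add K (mu a) (mu b)) \<and>
     (\<forall>c a. mu (asc A c a) = mul_sc K c (mu a)) \<and>
     (\<forall>a. mu a \<in> Mul K \<and> out_class K (mu a) = xi a) \<and>
     (\<forall>a b. fst (mu a) \<circ> snd (mu b) = snd (mu b) \<circ> fst (mu a))"

definition Anni :: "('f, 'k) alg \<Rightarrow> 'k set" where
  "Anni K = {n. \<forall>k. amul K n k = azero K \<and> amul K k n = azero K}"

definition hindrance ::
  "('f, 'a) alg \<Rightarrow> ('f, 'k) alg \<Rightarrow> ('a \<Rightarrow> 'k bim) \<Rightarrow> ('a \<Rightarrow> 'a \<Rightarrow> 'k) \<Rightarrow> bool" where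
  "hindrance A K mu h \<longleftrightarrow> bilin A K h \<and>
     (\<forall>a1 a2. mul_add K (eps K (h a1 a2)) (mu (amul A a1 a2)) = mul_prod (mu a1) (mu a2))"

definition obs_cocycle ::
  "('f, 'a) alg \<Rightarrow> ('f, 'k) alg \<Rightarrow> ('a \<Rightarrow> 'k bim) \<Rightarrow> ('a \<Rightarrow> 'a \<Rightarrow> 'k) \<Rightarrow> 'a \<Rightarrow> 'a \<Rightarrow> 'a \<Rightarrow> 'k" where
  "obs_cocycle A K mu h a1 a2 a3 =
     asub K (aadd K (asub K (fst (mu a1) (h a2 a3)) (h (amul A a1 a2) a3)) (h a1 (amul A a2 a3)))
            (snd (mu a3) (h a1 a2))"

text \<open>Hochschild coboundary of a 2-cochain g with values in the A-bimodule Anni K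
  (a\<cdot>n = u_a n, n\<cdot>a = v_a n).\<close>

definition hoch_cobound2 ::
  "('f, 'a) alg \<Rightarrow> ('f, 'k) alg \<Rightarrow> ('a \<Rightarrow> 'k bim) \<Rightarrow> ('a \<Rightarrow> 'a \<Rightarrow> 'k) \<Rightarrow> 'a \<Rightarrow> 'a \<Rightarrow> 'a \<Rightarrow> 'k" where
  "hoch_cobound2 A K mu g a1 a2 a3 =
     asub K (aadd K (asub K (fst (mu a1) (g a2 a3)) (g (amul A a1 a2) a3)) (g a1 (amul A a2 a3)))
            (snd (mu a3) (g a1 a2))"

text \<open>Obs(xi) = [f(mu,h)] = 0 in HH^3(A, Anni K): f(mu,h) is a Hochschild coboundary of a
  bilinear 2-cochain with values in Anni K.\<close>

definition obs_vanishes ::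
  "('f, 'a) alg \<Rightarrow> ('f, 'k) alg \<Rightarrow> ('a \<Rightarrow> 'k bim) \<Rightarrow> ('a \<Rightarrow> 'a \<Rightarrow> 'k) \<Rightarrow> bool" where
  "obs_vanishes A K mu h \<longleftrightarrow>
     (\<exists>g. bilin A K g \<and> (\<forall>a b. g a b \<in> Anni K) \<and>
          (\<forall>a1 a2 a3. obs_cocycle A K mu h a1 a2 a3 = hoch_cobound2 A K mu g a1 a2 a3))"

definition extendible ::
  "'b itself \<Rightarrow> ('f::field, 'a) alg \<Rightarrow> ('f, 'k) alg \<Rightarrow> ('a \<Rightarrow> 'k bim set) \<Rightarrow> bool" where
  "extendible _ A K xi \<longleftrightarrow>
     (\<exists>(B :: ('f, 'b) alg) iota beta gamma.
        is_alg B \<and> alg_hom K B iota \<and> inj iota \<and>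
        (\<forall>b k. amul B b (iota k) \<in> range iota \<and> amul B (iota k) b \<in> range iota) \<and>
        alg_hom B A beta \<and> surj beta \<and> {b. beta b = azero A} = range iota \<and>
        lin A B gamma \<and> (\<forall>a. beta (gamma a) = a) \<and>
        (\<forall>a. xi a = out_class K (\<lambda>k. inv iota (amul B (gamma a) (iota k)),
                                 \<lambda>k. inv iota (amul B (iota k) (gamma a)))))"

end

theory Submission
  imports Defs "HOL-Algebra.Ring"
begin

text \<open>
  A bimultiplication law mu with a bilinear H satisfying eps(H(a,b)) = mu(a)mu(b) - mu(ab) defines
  the crossed product on A \<times> K, with (a,k)(a',k') = (aa', u_a k' + v_a' k + kk' + H(a,a')); it is
  associative exactly when the cocycle f(mu,H) vanishes, and it then extends the kernel.
  Two hindrances for the same mu differ by an Anni K-valued bilinear map, which changes the cocycle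
  by its Hochschild coboundary; so Obs(xi) = 0 iff some hindrance has vanishing cocycle.
  Conversely, in an extension B choose a linear section g of B \<rightarrow> A whose inner action on K is mu;
  then g(a)g(b) - g(ab) lies in K, is a hindrance, and its cocycle vanishes by associativity of B.
\<close>

section \<open>Algebras given by their operations\<close>

locale assoc_alg =
  fixes R :: "('f::field, 'a) alg"
  assumes is_alg: "is_alg R"
begin

lemma add_assoc: "aadd R (aadd R x y) z = aadd R x (aadd R y z)"
  using is_alg unfolding is_alg_def by (elim conjE) (drule spec)+
lemma add_commute: "aadd R x y = aadd R y x"
  using is_alg unfolding is_alg_def by (elim conjE) (drule spec)+
lemma add_zero_left: "aadd R (azero R) x = x"
  using is_alg unfolding is_alg_def by (elim conjE) (drule spec)+
lemma add_neg_left: "aadd R (aneg R x) x = azero R"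
  using is_alg unfolding is_alg_def by (elim conjE) (drule spec)+
lemma scale_scale: "asc R (a * b) x = asc R a (asc R b x)"
  using is_alg unfolding is_alg_def by (elim conjE) (drule spec)+
lemma scale_one: "asc R 1 x = x"
  using is_alg unfolding is_alg_def by (elim conjE) (drule spec)+
lemma scale_add_right: "asc R a (aadd R x y) = aadd R (asc R a x) (asc R a y)"
  using is_alg unfolding is_alg_def by (elim conjE) (drule spec)+
lemma scale_add_left: "asc R (a + b) x = aadd R (asc R a x) (asc R b x)"
  using is_alg unfolding is_alg_def by (elim conjE) (drule spec)+
lemma mult_assoc: "amul R (amul R x y) z = amul R x (amul R y z)"
  using is_alg unfolding is_alg_def by (elim conjE) (drule spec)+
lemma distrib_left: "amul R x (aadd R y z) = aadd R (amul R x y) (amul R x z)"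
  using is_alg unfolding is_alg_def by (elim conjE) (drule spec)+
lemma distrib_right: "amul R (aadd R x y) z = aadd R (amul R x z) (amul R y z)"
  using is_alg unfolding is_alg_def by (elim conjE) (drule spec)+
lemma mult_scale_left: "amul R (asc R a x) y = asc R a (amul R x y)"
  using is_alg unfolding is_alg_def by (elim conjE) (drule spec)+
lemma mult_scale_right: "amul R x (asc R a y) = asc R a (amul R x y)"
  using is_alg unfolding is_alg_def by (elim conjE) (drule spec)+

lemma add_left_commute: "aadd R x (aadd R y z) = aadd R y (aadd R x z)"
  by (metis add_assoc add_commute)
lemma add_zero_right: "aadd R x (azero R) = x"
  by (metis add_commute add_zero_left)
lemma add_neg_right: "aadd R x (aneg R x) = azero R"
  by (metis add_commute add_neg_left)
lemma neg_add_cancel_left: "aadd R (aneg R x) (aadd R x y) = y"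
  by (metis add_assoc add_neg_left add_zero_left)
lemma add_neg_cancel_left: "aadd R x (aadd R (aneg R x) y) = y"
  by (metis add_assoc add_neg_right add_zero_left)
lemma neg_neg: "aneg R (aneg R x) = x"
  by (metis neg_add_cancel_left add_neg_right add_zero_right)
lemma neg_add: "aneg R (aadd R x y) = aadd R (aneg R x) (aneg R y)"
  by (metis add_assoc add_commute neg_add_cancel_left add_neg_right add_zero_right)
lemma neg_zero: "aneg R (azero R) = azero R"
  by (metis add_neg_left add_zero_right)
lemma add_left_cancel: "aadd R x y = aadd R x z \<Longrightarrow> y = z"
  by (metis neg_add_cancel_left)
lemma add_idem_imp_zero: "aadd R x x = x \<Longrightarrow> x = azero R"
  by (metis add_left_cancel add_zero_right)
lemma mult_zero_left: "amul R (azero R) x = azero R"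
  by (rule add_idem_imp_zero) (metis distrib_right add_zero_left)
lemma mult_zero_right: "amul R x (azero R) = azero R"
  by (rule add_idem_imp_zero) (metis distrib_left add_zero_left)
lemma mult_neg_left: "amul R (aneg R x) y = aneg R (amul R x y)"
  by (metis distrib_right add_neg_left mult_zero_left neg_add_cancel_left add_zero_right)
lemma mult_neg_right: "amul R x (aneg R y) = aneg R (amul R x y)"
  by (metis distrib_left add_neg_left mult_zero_right neg_add_cancel_left add_zero_right)
lemma scale_zero_right: "asc R c (azero R) = azero R"
  by (rule add_idem_imp_zero) (metis scale_add_right add_zero_left)
lemma scale_zero_left: "asc R 0 x = azero R"
  by (rule add_idem_imp_zero) (metis scale_add_left add_0)
lemma scale_neg_right: "asc R c (aneg R x) = aneg R (asc R c x)"
  by (metis scale_add_right add_neg_left scale_zero_right neg_add_cancel_left add_zero_right)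
lemma scale_minus_one: "asc R (-1) x = aneg R x"
  by (metis add_commute add_neg_cancel_left add_zero_right scale_add_left scale_one
      scale_zero_left add.left_inverse)
lemma diff_eq_zero_iff: "asub R x y = azero R \<longleftrightarrow> x = y"
  by (metis asub_def add_neg_right add_commute neg_add_cancel_left add_zero_right)

lemmas alg_rules [algebra add: assoc_alg "azero R" "aadd R" "aneg R" "asub R" "amul R"] =
  add_assoc add_zero_left add_neg_left add_commute mult_assoc distrib_right asub_def
  add_zero_right add_neg_right add_neg_cancel_left neg_add_cancel_left neg_add neg_neg neg_zero
  add_left_commute distrib_left mult_zero_left mult_zero_right mult_neg_left mult_neg_right

end

lemma lin_add: "lin R S f \<Longrightarrow> f (aadd R x y) = aadd S (f x) (f y)"
  unfolding lin_def by blast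

lemma lin_scale: "lin R S f \<Longrightarrow> f (asc R c x) = asc S c (f x)"
  unfolding lin_def by blast

lemma lin_zero:
  assumes "assoc_alg R" "assoc_alg S" "lin R S f"
  shows "f (azero R) = azero S"
proof -
  interpret R: assoc_alg R by fact
  interpret S: assoc_alg S by fact
  have "f (azero R) = aadd S (f (azero R)) (f (azero R))"
    using lin_add[OF assms(3), of "azero R" "azero R"] by (simp add: R.add_zero_left)
  then show ?thesis by (rule S.add_idem_imp_zero[OF sym])
qed

lemma lin_neg:
  assumes "assoc_alg R" "assoc_alg S" "lin R S f"
  shows "f (aneg R x) = aneg S (f x)"
proof -
  interpret R: assoc_alg R by fact
  interpret S: assoc_alg S by fact
  have "aadd S (f (aneg R x)) (f x) = azero S"
    using lin_add[OF assms(3), of "aneg R x" x] lin_zero[OF assms] by (simp add: R.add_neg_left)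
  then show ?thesis by (metis S.neg_add_cancel_left S.add_zero_right S.add_commute)
qed

lemma lin_diff:
  assumes "assoc_alg R" "assoc_alg S" "lin R S f"
  shows "f (asub R x y) = asub S (f x) (f y)"
  using lin_add[OF assms(3)] lin_neg[OF assms] by (simp add: asub_def)

locale alg_pair = A: assoc_alg A + K: assoc_alg K
  for A :: "('f::field, 'a) alg" and K :: "('f, 'k) alg"
begin

lemma lin_diff_fun:
  assumes "lin A K f" "lin A K g"
  shows "lin A K (\<lambda>x. asub K (f x) (g x))"
  using assms unfolding lin_def asub_def
  by (simp add: K.neg_add K.scale_add_right K.scale_neg_right K.add_assoc K.add_left_commute)

lemma bilin_diff:
  assumes "bilin A K f" "bilin A K g"
  shows "bilin A K (\<lambda>a b. asub K (f a b) (g a b))"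
  using assms lin_diff_fun unfolding bilin_def by blast

section \<open>Linear choice functions\<close>

text \<open>Zorn's lemma on graphs of partially defined linear maps inside P replaces the choice of a
  basis of A.\<close>

definition lin_subgraph :: "('a \<Rightarrow> 'k \<Rightarrow> bool) \<Rightarrow> ('a \<times> 'k) set \<Rightarrow> bool" where
  "lin_subgraph P G \<longleftrightarrow> (azero A, azero K) \<in> G \<and>
     (\<forall>x y. (x, y) \<in> G \<longrightarrow> P x y) \<and>
     (\<forall>x y x' y'. (x, y) \<in> G \<longrightarrow> (x', y') \<in> G \<longrightarrow> (aadd A x x', aadd K y y') \<in> G) \<and>
     (\<forall>c x y. (x, y) \<in> G \<longrightarrow> (asc A c x, asc K c y) \<in> G) \<and>
     (\<forall>x y y'. (x, y) \<in> G \<longrightarrow> (x, y') \<in> G \<longrightarrow> y = y')"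

lemma lin_subgraph_Union_chain:
  assumes C: "C \<in> chains (Collect (lin_subgraph P))" and "C \<noteq> {}"
  shows "lin_subgraph P (\<Union>C)"
proof -
  have member: "lin_subgraph P G" if "G \<in> C" for G
    using chainsD2[OF C] that by blast
  have common: "\<exists>G\<in>C. p \<in> G \<and> q \<in> G" if pq: "p \<in> \<Union>C" "q \<in> \<Union>C" for p q
  proof -
    obtain G G' where "G \<in> C" "G' \<in> C" "p \<in> G" "q \<in> G'" using pq by blast
    moreover have "G \<subseteq> G' \<or> G' \<subseteq> G" using chainsD[OF C] calculation(1,2) by blast
    ultimately show ?thesis by blast
  qed
  show ?thesis unfolding lin_subgraph_def
  proof (intro conjI allI impI)
    obtain G where "G \<in> C" using \<open>C \<noteq> {}\<close> by blast
    with member[OF this] show "(azero A, azero K) \<in> \<Union>C"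
      unfolding lin_subgraph_def by blast
  next
    fix x y assume "(x, y) \<in> \<Union>C"
    then obtain G where "G \<in> C" "(x, y) \<in> G" by blast
    with member[OF this(1)] show "P x y" unfolding lin_subgraph_def by blast
  next
    fix x y x' y' assume "(x, y) \<in> \<Union>C" "(x', y') \<in> \<Union>C"
    then obtain G where "G \<in> C" "(x, y) \<in> G" "(x', y') \<in> G" using common by blast
    with member[OF this(1)] show "(aadd A x x', aadd K y y') \<in> \<Union>C"
      unfolding lin_subgraph_def by blast
  next
    fix c x y assume "(x, y) \<in> \<Union>C"
    then obtain G where "G \<in> C" "(x, y) \<in> G" by blast
    with member[OF this(1)] show "(asc A c x, asc K c y) \<in> \<Union>C"
      unfolding lin_subgraph_def by blast
  next
    fix x y y' assume "(x, y) \<in> \<Union>C" "(x, y') \<in> \<Union>C"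
    then obtain G where "G \<in> C" "(x, y) \<in> G" "(x, y') \<in> G" using common by blast
    with member[OF this(1)] show "y = y'" unfolding lin_subgraph_def by blast
  qed
qed

lemma lin_subgraph_diff:
  assumes "lin_subgraph P G" "(x, y) \<in> G" "(x', y') \<in> G"
  shows "(asub A x x', asub K y y') \<in> G"
  using assms unfolding lin_subgraph_def asub_def
  by (metis A.scale_minus_one K.scale_minus_one)

lemma lin_subgraph_extend:
  assumes G: "lin_subgraph P G" and a: "a \<notin> fst ` G" and u: "P a u"
    and P_add: "\<And>x y x' y'. P x y \<Longrightarrow> P x' y' \<Longrightarrow> P (aadd A x x') (aadd K y y')"
    and P_scale: "\<And>c x y. P x y \<Longrightarrow> P (asc A c x) (asc K c y)"
  shows "lin_subgraph P {(aadd A x (asc A t a), aadd K y (asc K t u)) | x y t. (x, y) \<in> G}"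
proof -
  have closed: "(x, y) \<in> G \<Longrightarrow> (x', y') \<in> G \<Longrightarrow> (aadd A x x', aadd K y y') \<in> G"
    "(x, y) \<in> G \<Longrightarrow> (asc A c x, asc K c y) \<in> G"
    "(x, y) \<in> G \<Longrightarrow> P x y" for x y x' y' c
    using G unfolding lin_subgraph_def by blast+
  have functional: "y = y'" if "(x, y) \<in> G" "(x, y') \<in> G" for x y y'
    using G that unfolding lin_subgraph_def by blast
  have unique: "aadd K y (asc K t u) = aadd K y' (asc K t' u)"
    if xy: "(x, y) \<in> G" and xy': "(x', y') \<in> G"
      and eq: "aadd A x (asc A t a) = aadd A x' (asc A t' a)" for x y t x' y' t'
  proof (cases "t = t'")
    case True
    then show ?thesis
      using eq functional[OF xy] xy' A.add_left_cancel A.add_commute by metis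
  next
    case False
    have "asub A x x' = asub A (aadd A x (asc A t a)) (aadd A x' (asc A t a))"
      by algebra
    also have "\<dots> = asub A (aadd A x' (asc A t' a)) (aadd A x' (asc A t a))"
      by (simp only: eq)
    also have "\<dots> = asub A (asc A t' a) (asc A t a)"
      by algebra
    also have "\<dots> = asc A (t' - t) a"
      by (simp add: asub_def A.scale_add_left[symmetric] A.scale_minus_one[symmetric]
          A.scale_scale[symmetric])
    finally have "asc A (inverse (t' - t)) (asub A x x') = a"
      using False by (simp add: A.scale_scale[symmetric] A.scale_one)
    then have "a \<in> fst ` G"
      using closed(2)[OF lin_subgraph_diff[OF G xy xy']] by force
    with a show ?thesis by blast
  qed
  let ?G' = "{(aadd A x (asc A t a), aadd K y (asc K t u)) | x y t. (x, y) \<in> G}"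
  show ?thesis unfolding lin_subgraph_def
  proof (intro conjI allI impI)
    have "(azero A, azero K) \<in> G" using G unfolding lin_subgraph_def by blast
    then show "(azero A, azero K) \<in> ?G'"
      by (intro CollectI exI[of _ "azero A"] exI[of _ "azero K"] exI[of _ 0])
        (simp add: A.scale_zero_left K.scale_zero_left A.add_zero_right K.add_zero_right)
  next
    fix x y assume "(x, y) \<in> ?G'"
    then show "P x y" using closed(3) P_add P_scale u by blast
  next
    fix x y x' y' assume "(x, y) \<in> ?G'" "(x', y') \<in> ?G'"
    then obtain x0 y0 t x0' y0' t' where
      p: "x = aadd A x0 (asc A t a)" "y = aadd K y0 (asc K t u)" "(x0, y0) \<in> G" and
      q: "x' = aadd A x0' (asc A t' a)" "y' = aadd K y0' (asc K t' u)" "(x0', y0') \<in> G"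
      by blast
    have "aadd A x x' = aadd A (aadd A x0 x0') (asc A (t + t') a)"
      unfolding p q A.scale_add_left by algebra
    moreover have "aadd K y y' = aadd K (aadd K y0 y0') (asc K (t + t') u)"
      unfolding p q K.scale_add_left by algebra
    ultimately show "(aadd A x x', aadd K y y') \<in> ?G'"
      using closed(1)[OF p(3) q(3)] by blast
  next
    fix c x y assume "(x, y) \<in> ?G'"
    then obtain x0 y0 t where
      p: "x = aadd A x0 (asc A t a)" "y = aadd K y0 (asc K t u)" "(x0, y0) \<in> G"
      by blast
    have "asc A c x = aadd A (asc A c x0) (asc A (c * t) a)"
      "asc K c y = aadd K (asc K c y0) (asc K (c * t) u)"
      unfolding p A.scale_add_right K.scale_add_right A.scale_scale K.scale_scale by simp_all
    then show "(asc A c x, asc K c y) \<in> ?G'"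
      using closed(2)[OF p(3)] by blast
  next
    fix x y y' assume "(x, y) \<in> ?G'" "(x, y') \<in> ?G'"
    then show "y = y'" using unique by blast
  qed
qed

lemma lin_select:
  assumes P_ex: "\<And>x. \<exists>y. P x y"
    and P_add: "\<And>x y x' y'. P x y \<Longrightarrow> P x' y' \<Longrightarrow> P (aadd A x x') (aadd K y y')"
    and P_scale: "\<And>c x y. P x y \<Longrightarrow> P (asc A c x) (asc K c y)"
  shows "\<exists>f. lin A K f \<and> (\<forall>x. P x (f x))"
proof -
  have "P (azero A) (azero K)"
    using P_ex[of "azero A"] P_scale[of _ _ 0] by (auto simp: A.scale_zero_left K.scale_zero_left)
  then have "lin_subgraph P {(azero A, azero K)}"
    by (auto simp: lin_subgraph_def A.add_zero_left K.add_zero_left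
        A.scale_zero_right K.scale_zero_right)
  then have "\<exists>M\<in>Collect (lin_subgraph P). \<forall>G\<in>Collect (lin_subgraph P). M \<subseteq> G \<longrightarrow> G = M"
    using lin_subgraph_Union_chain
    by (intro Zorn_Lemma2) (metis Union_upper equals0D mem_Collect_eq)
  then obtain M where M: "lin_subgraph P M"
    and maximal: "\<And>G. lin_subgraph P G \<Longrightarrow> M \<subseteq> G \<Longrightarrow> G = M"
    by blast
  have total: "x \<in> fst ` M" for x
  proof (rule ccontr)
    assume x: "x \<notin> fst ` M"
    obtain y where y: "P x y" using P_ex by blast
    let ?M' = "{(aadd A x' (asc A t x), aadd K y' (asc K t y)) | x' y' t. (x', y') \<in> M}"
    have "lin_subgraph P ?M'"
      using lin_subgraph_extend[OF M x y P_add P_scale] .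
    moreover have "M \<subseteq> ?M'"
    proof
      fix p assume "p \<in> M"
      then show "p \<in> ?M'"
        by (intro CollectI exI[of _ "fst p"] exI[of _ "snd p"] exI[of _ 0])
          (simp add: A.scale_zero_left K.scale_zero_left A.add_zero_right K.add_zero_right)
    qed
    moreover have "(x, y) \<in> ?M'"
      using M unfolding lin_subgraph_def
      by (intro CollectI exI[of _ "azero A"] exI[of _ "azero K"] exI[of _ 1])
        (simp add: A.scale_one K.scale_one A.add_zero_left K.add_zero_left)
    ultimately show False using maximal x by force
  qed
  define f where "f x = (SOME y. (x, y) \<in> M)" for x
  have graph: "(x, f x) \<in> M" for x
    unfolding f_def using total[of x] by (auto intro: someI)
  have M_add: "(x, y) \<in> M \<Longrightarrow> (x', y') \<in> M \<Longrightarrow> (aadd A x x', aadd K y y') \<in> M"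
    and M_scale: "(x, y) \<in> M \<Longrightarrow> (asc A c x, asc K c y) \<in> M"
    and M_fun: "(x, y) \<in> M \<Longrightarrow> (x, y') \<in> M \<Longrightarrow> y = y'"
    and M_P: "(x, y) \<in> M \<Longrightarrow> P x y" for x y x' y' c
    using M unfolding lin_subgraph_def by blast+
  have "lin A K f"
    unfolding lin_def
    using M_fun[OF graph M_add[OF graph graph]] M_fun[OF graph M_scale[OF graph]] by blast
  with M_P[OF graph] show ?thesis by blast
qed

end

section \<open>Bimultiplication laws, hindrances and the crossed product\<close>

lemma out_class_self:
  assumes "assoc_alg K"
  shows "m \<in> out_class K m"
proof -
  interpret K: assoc_alg K by fact
  have "mul_add K m (eps K (azero K)) = m"
    by (simp add: mul_add_def eps_def K.mult_zero_left K.mult_zero_right K.add_zero_right)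
  then show ?thesis unfolding out_class_def by (metis (mono_tags, lifting) mem_Collect_eq)
qed

definition crossed_mult ::
  "('f, 'a) alg \<Rightarrow> ('f, 'k) alg \<Rightarrow> ('a \<Rightarrow> 'k bim) \<Rightarrow> ('a \<Rightarrow> 'a \<Rightarrow> 'k) \<Rightarrow>
     'a \<times> 'k \<Rightarrow> 'a \<times> 'k \<Rightarrow> 'a \<times> 'k" where
  "crossed_mult A K mu H = (\<lambda>(a, k) (a', k'). (amul A a a',
     aadd K (aadd K (aadd K (fst (mu a) k') (snd (mu a') k)) (amul K k k')) (H a a')))"

definition crossed_product ::
  "('f, 'a) alg \<Rightarrow> ('f, 'k) alg \<Rightarrow> ('a \<Rightarrow> 'k bim) \<Rightarrow> ('a \<Rightarrow> 'a \<Rightarrow> 'k) \<Rightarrow> ('f, 'a \<times> 'k) alg" where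
  "crossed_product A K mu H = \<lparr>
     aadd = \<lambda>p q. (aadd A (fst p) (fst q), aadd K (snd p) (snd q)),
     azero = (azero A, azero K),
     aneg = \<lambda>p. (aneg A (fst p), aneg K (snd p)),
     asc = \<lambda>c p. (asc A c (fst p), asc K c (snd p)),
     amul = crossed_mult A K mu H \<rparr>"

locale kernel_law = alg_pair A K for A :: "('f::field, 'a) alg" and K :: "('f, 'k) alg" +
  fixes xi :: "'a \<Rightarrow> 'k bim set" and mu :: "'a \<Rightarrow> 'k bim"
  assumes law: "bimult_law A K xi mu"
begin

abbreviation u where "u a \<equiv> fst (mu a)"
abbreviation v where "v a \<equiv> snd (mu a)"

lemma mu_bimult: "bimult K (mu a)"
  using law unfolding bimult_law_def Mul_def by blast
lemma mu_add: "mu (aadd A a b) = mul_add K (mu a) (mu b)"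
  using law unfolding bimult_law_def by blast
lemma mu_scale: "mu (asc A c a) = mul_sc K c (mu a)"
  using law unfolding bimult_law_def by blast
lemma out_class_mu: "out_class K (mu a) = xi a"
  using law unfolding bimult_law_def by blast
lemma u_v_commute: "u a (v b x) = v b (u a x)"
  using law unfolding bimult_law_def by (metis comp_apply)

lemma u_lin: "lin K K (u a)" using mu_bimult unfolding bimult_def by blast
lemma v_lin: "lin K K (v a)" using mu_bimult unfolding bimult_def by blast
lemma mult_u_eq_v_mult: "amul K x (u a y) = amul K (v a x) y"
  using mu_bimult unfolding bimult_def by blast
lemma u_mult: "u a (amul K x y) = amul K (u a x) y" using mu_bimult unfolding bimult_def by blast
lemma v_mult: "v a (amul K x y) = amul K x (v a y)" using mu_bimult unfolding bimult_def by blast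

lemmas u_add = lin_add[OF u_lin] and v_add = lin_add[OF v_lin]
  and u_scale = lin_scale[OF u_lin] and v_scale = lin_scale[OF v_lin]
  and u_zero = lin_zero[OF K.assoc_alg_axioms K.assoc_alg_axioms u_lin]
  and v_zero = lin_zero[OF K.assoc_alg_axioms K.assoc_alg_axioms v_lin]
  and u_diff = lin_diff[OF K.assoc_alg_axioms K.assoc_alg_axioms u_lin]
  and v_diff = lin_diff[OF K.assoc_alg_axioms K.assoc_alg_axioms v_lin]

lemma u_index_add: "u (aadd A a b) x = aadd K (u a x) (u b x)"
  by (simp add: mu_add mul_add_def)
lemma v_index_add: "v (aadd A a b) x = aadd K (v a x) (v b x)"
  by (simp add: mu_add mul_add_def)
lemma u_index_scale: "u (asc A c a) x = asc K c (u a x)"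
  by (simp add: mu_scale mul_sc_def)
lemma v_index_scale: "v (asc A c a) x = asc K c (v a x)"
  by (simp add: mu_scale mul_sc_def)
lemma u_index_zero: "u (azero A) x = azero K"
  using u_index_scale[of 0 "azero A" x] by (simp add: A.scale_zero_left K.scale_zero_left)
lemma v_index_zero: "v (azero A) x = azero K"
  using v_index_scale[of 0 "azero A" x] by (simp add: A.scale_zero_left K.scale_zero_left)

lemma hindrance_iff:
  "hindrance A K mu H \<longleftrightarrow> bilin A K H \<and>
     (\<forall>a b k. aadd K (amul K (H a b) k) (u (amul A a b) k) = u a (u b k) \<and>
              aadd K (amul K k (H a b)) (v (amul A a b) k) = v b (v a k))"
  unfolding hindrance_def mul_add_def eps_def mul_prod_def by (auto simp: fun_eq_iff)

lemma hindrance_left: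
  "hindrance A K mu H \<Longrightarrow> amul K (H a b) k = asub K (u a (u b k)) (u (amul A a b) k)"
  unfolding hindrance_iff by (metis K.neg_add_cancel_left asub_def K.add_commute)

lemma hindrance_right:
  "hindrance A K mu H \<Longrightarrow> amul K k (H a b) = asub K (v b (v a k)) (v (amul A a b) k)"
  unfolding hindrance_iff by (metis K.neg_add_cancel_left asub_def K.add_commute)

lemma hindrance_diff_mem_Anni:
  assumes "hindrance A K mu H" "hindrance A K mu H'"
  shows "asub K (H a b) (H' a b) \<in> Anni K"
  unfolding Anni_def
  by (simp add: asub_def K.distrib_left K.distrib_right K.mult_neg_left K.mult_neg_right
      hindrance_left[OF assms(1)] hindrance_left[OF assms(2)]
      hindrance_right[OF assms(1)] hindrance_right[OF assms(2)] K.add_neg_right)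

lemma hindrance_minus_Anni_valued:
  assumes H: "hindrance A K mu H" and g: "bilin A K g" "\<And>a b. g a b \<in> Anni K"
  shows "hindrance A K mu (\<lambda>a b. asub K (H a b) (g a b))"
proof -
  have "amul K (g a b) k = azero K" "amul K k (g a b) = azero K" for a b k
    using g(2) unfolding Anni_def by blast+
  then show ?thesis
    using H bilin_diff[OF _ g(1)]
    by (simp add: hindrance_iff asub_def K.distrib_left K.distrib_right K.mult_neg_left
        K.mult_neg_right K.neg_zero K.add_zero_right)
qed

lemma obs_cocycle_diff:
  "asub K (obs_cocycle A K mu H x y z) (obs_cocycle A K mu H' x y z) =
   hoch_cobound2 A K mu (\<lambda>a b. asub K (H a b) (H' a b)) x y z"
  unfolding obs_cocycle_def hoch_cobound2_def u_diff v_diff by algebra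

lemma obs_vanishes_iff_cocycle_free_hindrance:
  assumes h: "hindrance A K mu h"
  shows "obs_vanishes A K mu h \<longleftrightarrow>
    (\<exists>H. hindrance A K mu H \<and> (\<forall>x y z. obs_cocycle A K mu H x y z = azero K))"
proof
  assume "obs_vanishes A K mu h"
  then obtain g where g: "bilin A K g" "\<And>a b. g a b \<in> Anni K"
    and cobound: "\<And>x y z. obs_cocycle A K mu h x y z = hoch_cobound2 A K mu g x y z"
    unfolding obs_vanishes_def by blast
  define H where "H a b = asub K (h a b) (g a b)" for a b
  have "hindrance A K mu H"
    unfolding H_def using hindrance_minus_Anni_valued[OF h g] .
  moreover have "obs_cocycle A K mu H x y z = azero K" for x y z
  proof -
    have "(\<lambda>a b. asub K (h a b) (H a b)) = g"
      unfolding H_def by (intro ext) algebra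
    then have "asub K (obs_cocycle A K mu h x y z) (obs_cocycle A K mu H x y z) =
               obs_cocycle A K mu h x y z"
      using obs_cocycle_diff[of h x y z H] cobound by simp
    then show ?thesis by (metis K.add_left_cancel K.add_zero_right asub_def K.neg_neg K.neg_zero)
  qed
  ultimately show "\<exists>H. hindrance A K mu H \<and> (\<forall>x y z. obs_cocycle A K mu H x y z = azero K)"
    by blast
next
  assume "\<exists>H. hindrance A K mu H \<and> (\<forall>x y z. obs_cocycle A K mu H x y z = azero K)"
  then obtain H where H: "hindrance A K mu H" and zero: "\<And>x y z. obs_cocycle A K mu H x y z = azero K"
    by blast
  let ?g = "\<lambda>a b. asub K (h a b) (H a b)"
  have "bilin A K ?g"
    using h H by (intro bilin_diff) (simp_all add: hindrance_def)
  moreover have "?g a b \<in> Anni K" for a b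
    using hindrance_diff_mem_Anni[OF h H] .
  moreover have "obs_cocycle A K mu h x y z = hoch_cobound2 A K mu ?g x y z" for x y z
    using obs_cocycle_diff[of h x y z H] zero
    by (simp add: asub_def K.neg_zero K.add_zero_right)
  ultimately show "obs_vanishes A K mu h"
    unfolding obs_vanishes_def by blast
qed

end

locale cocycle_free_hindrance = kernel_law A K xi mu
  for A :: "('f::field, 'a) alg" and K :: "('f, 'k) alg" and xi mu +
  fixes H :: "'a \<Rightarrow> 'a \<Rightarrow> 'k"
  assumes hindrance: "hindrance A K mu H"
    and cocycle_zero: "obs_cocycle A K mu H x y z = azero K"
begin

abbreviation B where "B \<equiv> crossed_product A K mu H"

lemma B_additive_simps [simp]:
  "aadd B p q = (aadd A (fst p) (fst q), aadd K (snd p) (snd q))"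
  "azero B = (azero A, azero K)"
  "aneg B p = (aneg A (fst p), aneg K (snd p))"
  "asc B c p = (asc A c (fst p), asc K c (snd p))"
  by (simp_all add: crossed_product_def)

lemma B_mult:
  "amul B (a, k) (a', k') =
     (amul A a a', aadd K (aadd K (aadd K (u a k') (v a' k)) (amul K k k')) (H a a'))"
  by (simp add: crossed_product_def crossed_mult_def)

lemma H_lin_left: "lin A K (\<lambda>a. H a b)" and H_lin_right: "lin A K (H a)"
  using hindrance unfolding hindrance_def bilin_def by blast+

text \<open>In the K-component, associativity is exactly the two hindrance identities together with the
  vanishing of the cocycle.\<close>

lemma B_mult_assoc: "amul B (amul B p q) r = amul B p (amul B q r)"
proof -
  obtain a k a' k' a'' k'' where pqr: "p = (a, k)" "q = (a', k')" "r = (a'', k'')"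
    by (cases p, cases q, cases r) blast
  have e1: "u (amul A a a') k'' = asub K (u a (u a' k'')) (amul K (H a a') k'')"
    and e2: "v (amul A a' a'') k = asub K (v a'' (v a' k)) (amul K k (H a' a''))"
    using hindrance_left[OF hindrance] hindrance_right[OF hindrance] by algebra+
  have e3: "v a'' (H a a') =
      aadd K (asub K (u a (H a' a'')) (H (amul A a a') a'')) (H a (amul A a' a''))"
    using cocycle_zero[of a a' a''] unfolding obs_cocycle_def K.diff_eq_zero_iff by simp
  show ?thesis
    unfolding pqr B_mult A.mult_assoc prod.inject
    by (simp only: u_add v_add K.distrib_left K.distrib_right v_mult e1 e2 e3
        mult_u_eq_v_mult[symmetric] u_mult[symmetric] u_v_commute[of a a'']) algebra
qed

lemma B_distrib_left: "amul B p (aadd B q r) = aadd B (amul B p q) (amul B p r)"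
proof -
  obtain a k a' k' a'' k'' where pqr: "p = (a, k)" "q = (a', k')" "r = (a'', k'')"
    by (cases p, cases q, cases r) blast
  show ?thesis
    unfolding pqr B_additive_simps fst_conv snd_conv B_mult A.distrib_left prod.inject
    by (simp only: u_add v_index_add K.distrib_left lin_add[OF H_lin_right]) algebra
qed

lemma B_distrib_right: "amul B (aadd B p q) r = aadd B (amul B p r) (amul B q r)"
proof -
  obtain a k a' k' a'' k'' where pqr: "p = (a, k)" "q = (a', k')" "r = (a'', k'')"
    by (cases p, cases q, cases r) blast
  show ?thesis
    unfolding pqr B_additive_simps fst_conv snd_conv B_mult A.distrib_right prod.inject
    by (simp only: u_index_add v_add K.distrib_right lin_add[OF H_lin_left]) algebra
qed

lemma B_mult_scale_left: "amul B (asc B c p) q = asc B c (amul B p q)"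
  by (cases p, cases q) (simp add: B_mult A.mult_scale_left u_index_scale v_scale
      K.mult_scale_left lin_scale[OF H_lin_left] K.scale_add_right)

lemma B_mult_scale_right: "amul B p (asc B c q) = asc B c (amul B p q)"
  by (cases p, cases q) (simp add: B_mult A.mult_scale_right u_scale v_index_scale
      K.mult_scale_right lin_scale[OF H_lin_right] K.scale_add_right)

lemma crossed_product_is_alg: "is_alg B"
  unfolding is_alg_def
  by (intro conjI allI B_mult_assoc B_distrib_left B_distrib_right B_mult_scale_left
      B_mult_scale_right)
    (simp_all add: A.add_assoc K.add_assoc A.add_commute K.add_commute A.add_left_commute
      K.add_left_commute A.add_zero_left K.add_zero_left A.add_neg_left K.add_neg_left
      A.add_neg_right K.add_neg_right A.scale_scale K.scale_scale A.scale_one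
      K.scale_one A.scale_add_right K.scale_add_right A.scale_add_left K.scale_add_left)

lemma crossed_product_extendible: "extendible TYPE('a \<times> 'k) A K xi"
proof -
  let ?iota = "Pair (azero A) :: 'k \<Rightarrow> 'a \<times> 'k"
  let ?gamma = "\<lambda>a. (a, azero K)"
  have H_zero: "H (azero A) b = azero K" "H a (azero A) = azero K" for a b
    using lin_zero[OF A.assoc_alg_axioms K.assoc_alg_axioms H_lin_left]
      lin_zero[OF A.assoc_alg_axioms K.assoc_alg_axioms H_lin_right] by blast+
  have inv_iota: "inv_into UNIV ?iota (azero A, k) = k" for k
    by (rule inv_f_f) (simp add: inj_def)
  have "alg_hom K B ?iota"
    unfolding alg_hom_def lin_def
    by (simp add: B_mult A.add_zero_left A.scale_zero_right A.mult_zero_left u_index_zero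
        v_index_zero H_zero K.add_zero_left K.add_zero_right)
  moreover have "amul B b (?iota k) \<in> range ?iota \<and> amul B (?iota k) b \<in> range ?iota" for b k
    by (cases b) (simp add: B_mult A.mult_zero_left A.mult_zero_right)
  moreover have "alg_hom B A fst"
    unfolding alg_hom_def lin_def by (simp add: B_mult split_paired_all)
  moreover have "{p. fst p = azero A} = range ?iota" by force
  moreover have "lin A B ?gamma"
    unfolding lin_def by (simp add: K.add_zero_left K.scale_zero_right)
  moreover have "xi a = out_class K (\<lambda>k. inv_into UNIV ?iota (amul B (?gamma a) (?iota k)),
                                      \<lambda>k. inv_into UNIV ?iota (amul B (?iota k) (?gamma a)))" for a
    using out_class_mu[of a]
    by (simp add: B_mult A.mult_zero_left A.mult_zero_right inv_iota u_zero v_zero u_index_zero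
        v_index_zero H_zero K.mult_zero_left K.mult_zero_right K.add_zero_left K.add_zero_right)
  ultimately show ?thesis
    unfolding extendible_def using crossed_product_is_alg
    by (intro exI[of _ B] exI[of _ ?iota] exI[of _ fst] exI[of _ ?gamma])
      (auto simp: inj_def surj_def)
qed

end

section \<open>Extensions\<close>

locale kernel_extension = kernel_law A K xi mu + B: assoc_alg B
  for A :: "('f::field, 'a) alg" and K :: "('f, 'k) alg" and xi mu and B :: "('f, 'b) alg" +
  fixes iota :: "'k \<Rightarrow> 'b" and beta :: "'b \<Rightarrow> 'a"
  assumes iota_hom: "alg_hom K B iota" and inj_iota: "inj iota"
    and beta_hom: "alg_hom B A beta" and ker_beta: "{b. beta b = azero A} = range iota"
begin

lemma iota_lin: "lin K B iota" using iota_hom unfolding alg_hom_def by blast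
lemma beta_lin: "lin B A beta" using beta_hom unfolding alg_hom_def by blast

lemmas iota_add = lin_add[OF iota_lin] and iota_scale = lin_scale[OF iota_lin]
  and iota_zero = lin_zero[OF K.assoc_alg_axioms B.assoc_alg_axioms iota_lin]
  and iota_diff = lin_diff[OF K.assoc_alg_axioms B.assoc_alg_axioms iota_lin]
  and beta_add = lin_add[OF beta_lin]
  and beta_diff = lin_diff[OF B.assoc_alg_axioms A.assoc_alg_axioms beta_lin]

lemma iota_mult: "iota (amul K x y) = amul B (iota x) (iota y)"
  using iota_hom unfolding alg_hom_def by blast
lemma beta_mult: "beta (amul B x y) = amul A (beta x) (beta y)"
  using beta_hom unfolding alg_hom_def by blast
lemma beta_iota: "beta (iota k) = azero A"
  using ker_beta by blast
lemma iota_inv_into: "beta z = azero A \<Longrightarrow> iota (inv_into UNIV iota z) = z"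
  using ker_beta by (blast intro: f_inv_into_f)
lemma iota_eqD: "iota x = iota y \<Longrightarrow> x = y"
  using inj_iota unfolding inj_def by blast

definition induces_mu :: "'b \<Rightarrow> 'a \<Rightarrow> bool" where
  "induces_mu b a \<longleftrightarrow> (\<forall>k. iota (u a k) = amul B b (iota k) \<and> iota (v a k) = amul B (iota k) b)"

text \<open>The lift is gamma(a) + iota(c a); the correction c is determined only modulo Anni K, and must
  be chosen linearly.\<close>

lemma induces_mu_lift_exists:
  assumes gamma: "lin A B gamma" "\<And>a. beta (gamma a) = a"
    and xi: "\<And>a. xi a = out_class K
      (\<lambda>k. inv_into UNIV iota (amul B (gamma a) (iota k)),
       \<lambda>k. inv_into UNIV iota (amul B (iota k) (gamma a)))"
  shows "\<exists>g. lin A B g \<and> (\<forall>a. beta (g a) = a) \<and> (\<forall>a. induces_mu (g a) a)"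
proof -
  let ?P = "\<lambda>a y. induces_mu (aadd B (gamma a) (iota y)) a"
  have "\<exists>y. ?P a y" for a
  proof -
    have in_K: "beta (amul B (gamma a) (iota k)) = azero A"
      "beta (amul B (iota k) (gamma a)) = azero A" for k
      by (simp_all add: beta_mult beta_iota A.mult_zero_left A.mult_zero_right)
    have "mu a \<in> xi a"
      using out_class_self[OF K.assoc_alg_axioms] out_class_mu by metis
    then obtain y where y: "mu a = mul_add K
      (\<lambda>k. inv_into UNIV iota (amul B (gamma a) (iota k)),
       \<lambda>k. inv_into UNIV iota (amul B (iota k) (gamma a))) (eps K y)"
      unfolding xi out_class_def by blast
    have "?P a y"
      unfolding induces_mu_def y
      by (simp add: mul_add_def eps_def iota_add iota_mult iota_inv_into in_K B.distrib_left
          B.distrib_right)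
    then show ?thesis ..
  qed
  moreover have "?P (aadd A a a') (aadd K y y')" if "?P a y" "?P a' y'" for a a' y y'
    using that unfolding induces_mu_def
    by (simp add: u_index_add v_index_add iota_add lin_add[OF gamma(1)] B.distrib_left
        B.distrib_right B.add_assoc B.add_left_commute)
  moreover have "?P (asc A c a) (asc K c y)" if "?P a y" for c a y
    using that unfolding induces_mu_def
    by (simp add: u_index_scale v_index_scale iota_scale lin_scale[OF gamma(1)]
        B.scale_add_right[symmetric] B.mult_scale_left B.mult_scale_right)
  ultimately obtain c where c: "lin A K c" "\<And>a. ?P a (c a)"
    using lin_select[of ?P] by blast
  let ?g = "\<lambda>a. aadd B (gamma a) (iota (c a))"
  have "lin A B ?g"
    using gamma(1) c(1) unfolding lin_def
    by (simp add: iota_add iota_scale B.scale_add_right B.add_assoc B.add_left_commute)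
  moreover have "beta (?g a) = a" for a
    by (simp add: beta_add gamma(2) beta_iota A.add_zero_right)
  ultimately show ?thesis using c(2) by blast
qed

lemma induces_mu_lift_hindrance:
  assumes g: "lin A B g" "\<And>a. beta (g a) = a" "\<And>a. induces_mu (g a) a"
  shows "\<exists>H. hindrance A K mu H \<and> (\<forall>x y z. obs_cocycle A K mu H x y z = azero K)"
proof -
  define D where "D a b = asub B (amul B (g a) (g b)) (g (amul A a b))" for a b
  define H where "H a b = inv_into UNIV iota (D a b)" for a b
  have iota_H: "iota (H a b) = D a b" for a b
    unfolding H_def D_def
    by (rule iota_inv_into) (simp add: beta_diff beta_mult g(2) A.diff_eq_zero_iff)
  have iota_u: "iota (u a k) = amul B (g a) (iota k)"
    and iota_v: "iota (v a k) = amul B (iota k) (g a)" for a k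
    using g(3) unfolding induces_mu_def by blast+
  have "lin A K (\<lambda>a. H a b)" for b
    unfolding lin_def
  proof (intro conjI allI)
    show "H (aadd A x y) b = aadd K (H x b) (H y b)" for x y
      by (rule iota_eqD)
        (simp only: iota_add iota_H D_def A.distrib_right lin_add[OF g(1)] B.distrib_right, algebra)
    show "H (asc A c x) b = asc K c (H x b)" for c x
      by (rule iota_eqD) (simp only: iota_scale iota_H D_def A.mult_scale_left lin_scale[OF g(1)]
          B.mult_scale_left asub_def B.scale_add_right B.scale_neg_right)
  qed
  moreover have "lin A K (H a)" for a
    unfolding lin_def
  proof (intro conjI allI)
    show "H a (aadd A x y) = aadd K (H a x) (H a y)" for x y
      by (rule iota_eqD)
        (simp only: iota_add iota_H D_def A.distrib_left lin_add[OF g(1)] B.distrib_left, algebra)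
    show "H a (asc A c x) = asc K c (H a x)" for c x
      by (rule iota_eqD) (simp only: iota_scale iota_H D_def A.mult_scale_right lin_scale[OF g(1)]
          B.mult_scale_right asub_def B.scale_add_right B.scale_neg_right)
  qed
  moreover have "aadd K (amul K (H a b) k) (u (amul A a b) k) = u a (u b k)"
    and "aadd K (amul K k (H a b)) (v (amul A a b) k) = v b (v a k)" for a b k
    by (rule iota_eqD, simp only: iota_add iota_mult iota_H iota_u iota_v D_def, algebra)+
  ultimately have "hindrance A K mu H"
    unfolding hindrance_iff bilin_def by blast
  moreover have "obs_cocycle A K mu H x y z = azero K" for x y z
    by (rule iota_eqD) (simp only: obs_cocycle_def iota_diff iota_add iota_u iota_v iota_H
        iota_zero D_def A.mult_assoc, algebra)
  ultimately show ?thesis by blast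
qed

end

lemma (in kernel_law) extendible_imp_cocycle_free_hindrance:
  assumes "extendible TYPE('b) A K xi"
  shows "\<exists>H. hindrance A K mu H \<and> (\<forall>x y z. obs_cocycle A K mu H x y z = azero K)"
proof -
  obtain B :: "('f, 'b) alg" and iota beta gamma where
    "is_alg B" "alg_hom K B iota" "inj iota" "alg_hom B A beta"
    "{b. beta b = azero A} = range iota" and
    gamma: "lin A B gamma" "\<And>a. beta (gamma a) = a"
      "\<And>a. xi a = out_class K (\<lambda>k. inv_into UNIV iota (amul B (gamma a) (iota k)),
                                 \<lambda>k. inv_into UNIV iota (amul B (iota k) (gamma a)))"
    using assms unfolding extendible_def by blast
  then interpret kernel_extension A K xi mu B iota beta
    by unfold_locales
  show ?thesis
    using induces_mu_lift_exists[OF gamma] induces_mu_lift_hindrance by blast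
qed

theorem mainTheorem17:
  fixes A :: "('f::field, 'a) alg" and K :: "('f, 'k) alg"
    and xi :: "'a \<Rightarrow> 'k bim set" and mu :: "'a \<Rightarrow> 'k bim" and h :: "'a \<Rightarrow> 'a \<Rightarrow> 'k"
  assumes "is_alg A" and "is_alg K"
    and "coupling A K xi"
    and "bimult_law A K xi mu"
    and "hindrance A K mu h"
  shows "(extendible TYPE('b) A K xi \<longrightarrow> obs_vanishes A K mu h) \<and>
         (obs_vanishes A K mu h \<longleftrightarrow> extendible TYPE('a \<times> 'k) A K xi)"
proof -
  interpret kernel_law A K xi mu
    using assms by (simp add: kernel_law_def kernel_law_axioms_def alg_pair_def assoc_alg_def)
  have vanishes_iff: "obs_vanishes A K mu h \<longleftrightarrow>
      (\<exists>H. hindrance A K mu H \<and> (\<forall>x y z. obs_cocycle A K mu H x y z = azero K))"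
    using obs_vanishes_iff_cocycle_free_hindrance[OF assms(5)] .
  have extendible_imp_vanishes: "obs_vanishes A K mu h" if "extendible TYPE('c) A K xi"
    using extendible_imp_cocycle_free_hindrance[OF that] vanishes_iff by blast
  have vanishes_imp_extendible: "extendible TYPE('a \<times> 'k) A K xi"
    if vanishes: "obs_vanishes A K mu h"
  proof -
    obtain H where "hindrance A K mu H" "\<And>x y z. obs_cocycle A K mu H x y z = azero K"
      using vanishes vanishes_iff by blast
    then interpret cocycle_free_hindrance A K xi mu H
      by unfold_locales
    show ?thesis by (rule crossed_product_extendible)
  qed
  show ?thesis
    using extendible_imp_vanishes[where 'c = 'b] extendible_imp_vanishes[where 'c = "'a \<times> 'k"]
      vanishes_imp_extendible by blast
qed

end
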